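(* Let $\hat u_0:\mathbb{R}^n\to\mathbb{R}^m$ be such that its graph $M_0\subset\mathbb{R}^{n,m}$ is spacelike and $0\in M_0$. Then $$\lim_{R\to\infty}\inf_{x\in\mathbb{R}^n\setminus B_R}\big[|x|^2-\|\hat u_0(x)\|^2\big]=\infty,$$ equivalently $\lim_{R\to\infty}\inf_{M_0\setminus\mathcal{C}_R}|X|^2=\infty$. Moreover, there exists $\epsilon>0$ such that $\|\hat u_0\|\le\chi_\epsilon$, where $\chi_\epsilon(x)=1-\epsilon$ for $x\in\overline{B_1(0)}$ and $\chi_\epsilon(x)=|x|-\epsilon$ for $x\in\mathbb{R}^n\setminus B_1(0)$.
   Context: $\mathbb{R}^{n,m}=\mathbb{R}^n\times\mathbb{R}^m$ with quadratic form $|(x,y)|^2=|x|^2-\|y\|^2$ ($|x|,\|y\|$ Euclidean norms). The graph is spacelike if $\delta_{ij}-\sum_AD_i\hat u_0^AD_j\hat u_0^A$ is positive definite. $X$ is the position vector of $M_0$, $B_R\subset\mathbb{R}^n$ the Euclidean ball, and $\mathcal{C}_R=\{(x,y)\in\mathbb{R}^{n,m}:|x|^2<R^2\}$ the solid cylinder. *)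

theory Defs
  imports "HOL-Analysis.Analysis"
begin

definition graph_metric ::
  "(real^'n \<Rightarrow> real^'m) \<Rightarrow> real^'n \<Rightarrow> 'n \<Rightarrow> 'n \<Rightarrow> real" where
  "graph_metric u x i j =
     (if i = j then 1 else 0)
     - (\<Sum>A\<in>UNIV. (frechet_derivative u (at x) (axis i 1)) $ A
                    * (frechet_derivative u (at x) (axis j 1)) $ A)"

definition spacelike_graph :: "(real^'n \<Rightarrow> real^'m) \<Rightarrow> bool" where
  "spacelike_graph u \<longleftrightarrow>
     (\<forall>x. u differentiable (at x)) \<and>
     (\<forall>x. \<forall>v::real^'n. v \<noteq> 0 \<longrightarrow>
        (\<Sum>i\<in>UNIV. \<Sum>j\<in>UNIV. v $ i * graph_metric u x i j * v $ j) > 0)"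

definition lorentz_sq :: "(real^'n) \<times> (real^'m) \<Rightarrow> real" where
  "lorentz_sq p = norm (fst p) ^ 2 - norm (snd p) ^ 2"

definition graph_of :: "(real^'n \<Rightarrow> real^'m) \<Rightarrow> ((real^'n) \<times> (real^'m)) set" where
  "graph_of u = {(x, u x) | x. True}"

definition cylinder :: "real \<Rightarrow> ((real^'n) \<times> (real^'m)) set" where
  "cylinder R = {p. norm (fst p) ^ 2 < R ^ 2}"

definition chi :: "real \<Rightarrow> real^'n \<Rightarrow> real" where
  "chi \<epsilon> x = (if norm x \<le> 1 then 1 - \<epsilon> else norm x - \<epsilon>)"

end

theory Submission
  imports Defs
begin

text \<open>The quadratic form of the induced metric at a point x is
  v \<mapsto> |v|^2 - |Du(x) v|^2, so spacelikeness says exactly that every differential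
  Du(x) is a strict contraction. By the mean value inequality u itself is then a strict
  contraction, and since u(0) = 0 and the closed unit ball is compact, |u| \<le> 1 - \<epsilon> there
  for some \<epsilon> > 0. Comparing a point x outside the ball with x / |x| gives
  |u(x)| \<le> |x| - \<epsilon>, whence |x|^2 - |u(x)|^2 \<ge> 2\<epsilon>|x| - \<epsilon>^2 \<rightarrow> \<infinity>.\<close>

lemma graph_quadratic_form_eq:
  fixes D :: "real^'n \<Rightarrow> real^'m"
  assumes "linear D"
  shows "(\<Sum>i\<in>UNIV. \<Sum>j\<in>UNIV. v $ i * ((if i = j then 1 else 0)
            - (\<Sum>A\<in>UNIV. D (axis i 1) $ A * D (axis j 1) $ A)) * v $ j)
         = norm v ^ 2 - norm (D v) ^ 2"
proof -
  have Dv: "D v = (\<Sum>i\<in>UNIV. v $ i *\<^sub>R D (axis i 1))"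
  proof -
    have "v = (\<Sum>i\<in>UNIV. v $ i *\<^sub>R axis i 1)"
      using basis_expansion[of v] by (simp add: scalar_mult_eq_scaleR)
    then have "D v = D (\<Sum>i\<in>UNIV. v $ i *\<^sub>R axis i 1)" by simp
    also have "\<dots> = (\<Sum>i\<in>UNIV. v $ i *\<^sub>R D (axis i 1))"
      using assms by (simp add: linear_sum linear_cmul)
    finally show ?thesis .
  qed
  have norm_sq: "norm w ^ 2 = (\<Sum>i\<in>UNIV. w $ i * w $ i)" for w :: "real^'k"
    by (simp add: norm_vec_def L2_set_def power2_eq_square sum_nonneg)
  have "(\<Sum>i\<in>UNIV. \<Sum>j\<in>UNIV. v $ i * ((if i = j then 1 else 0)
            - (\<Sum>A\<in>UNIV. D (axis i 1) $ A * D (axis j 1) $ A)) * v $ j)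
    = (\<Sum>i\<in>UNIV. \<Sum>j\<in>UNIV. v $ i * (if i = j then 1 else 0) * v $ j)
      - (\<Sum>i\<in>UNIV. \<Sum>j\<in>UNIV. \<Sum>A\<in>UNIV. v $ i * D (axis i 1) $ A * (D (axis j 1) $ A * v $ j))"
    by (simp add: right_diff_distrib left_diff_distrib sum_subtractf sum_distrib_left
        sum_distrib_right mult.assoc)
  also have "(\<Sum>i\<in>UNIV. \<Sum>j\<in>UNIV. v $ i * (if i = j then 1 else 0) * v $ j) = norm v ^ 2"
    unfolding norm_sq by (simp add: if_distrib if_distribR cong: if_cong)
  also have "(\<Sum>i\<in>UNIV. \<Sum>j\<in>UNIV. \<Sum>A\<in>UNIV. v $ i * D (axis i 1) $ A * (D (axis j 1) $ A * v $ j))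
    = (\<Sum>i\<in>UNIV. \<Sum>A\<in>UNIV. \<Sum>j\<in>UNIV. v $ i * D (axis i 1) $ A * (D (axis j 1) $ A * v $ j))"
    by (intro sum.cong refl sum.swap)
  also have "\<dots> = (\<Sum>A\<in>UNIV. \<Sum>i\<in>UNIV. \<Sum>j\<in>UNIV. v $ i * D (axis i 1) $ A * (D (axis j 1) $ A * v $ j))"
    by (rule sum.swap)
  also have "\<dots> = (\<Sum>A\<in>UNIV. (\<Sum>i\<in>UNIV. v $ i * D (axis i 1) $ A)
                             * (\<Sum>j\<in>UNIV. D (axis j 1) $ A * v $ j))"
    by (simp only: sum_product)
  also have "\<dots> = norm (D v) ^ 2"
    unfolding norm_sq by (simp add: Dv sum_component mult.commute)
  finally show ?thesis .
qed

lemma spacelike_graph_derivative_contraction: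
  fixes u :: "real^'n \<Rightarrow> real^'m"
  assumes "spacelike_graph u" and "v \<noteq> 0"
  shows "norm (frechet_derivative u (at x) v) < norm v"
proof -
  have "linear (frechet_derivative u (at x))"
    using assms(1) frechet_derivative_works has_derivative_linear
    unfolding spacelike_graph_def by blast
  moreover have "(\<Sum>i\<in>UNIV. \<Sum>j\<in>UNIV. v $ i * graph_metric u x i j * v $ j) > 0"
    using assms unfolding spacelike_graph_def by blast
  ultimately have "norm (frechet_derivative u (at x) v) ^ 2 < norm v ^ 2"
    unfolding graph_metric_def by (simp add: graph_quadratic_form_eq)
  then show ?thesis
    using power_less_imp_less_base by fastforce
qed

lemma spacelike_graph_dist_less:
  fixes u :: "real^'n \<Rightarrow> real^'m"
  assumes sp: "spacelike_graph u" and "a \<noteq> b"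
  shows "dist (u a) (u b) < dist a b"
proof -
  define D where "D = (\<lambda>y. frechet_derivative u (at y))"
  define h where "h = (\<lambda>t::real. u (a + t *\<^sub>R (b - a)))"
  have h_deriv: "(h has_derivative (\<lambda>s. D (a + t *\<^sub>R (b - a)) (s *\<^sub>R (b - a)))) (at t)" for t
  proof -
    have "(u has_derivative D y) (at y)" for y
      using sp frechet_derivative_works unfolding spacelike_graph_def D_def by blast
    moreover have "((\<lambda>t. a + t *\<^sub>R (b - a)) has_derivative (\<lambda>s. s *\<^sub>R (b - a))) (at t)"
      by (auto intro!: derivative_eq_intros)
    ultimately show ?thesis
      unfolding h_def using has_derivative_compose by blast
  qed
  then have "continuous_on {0..1} h"
    by (meson continuous_at_imp_continuous_on has_derivative_continuous)
  then obtain t where "norm (h 1 - h 0) \<le> norm (D (a + t *\<^sub>R (b - a)) ((1 - 0) *\<^sub>R (b - a)))"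
    using mvt_general[of 0 1 h, OF _ _ h_deriv] by auto
  also have "\<dots> < norm (b - a)"
    unfolding D_def using spacelike_graph_derivative_contraction[OF sp] \<open>a \<noteq> b\<close> by simp
  finally show ?thesis
    unfolding h_def by (simp add: dist_norm norm_minus_commute)
qed

lemma strict_contraction_bounded_on_unit_ball:
  fixes u :: "'a::euclidean_space \<Rightarrow> 'b::real_normed_vector"
  assumes "u 0 = 0" and contr: "\<And>a b. a \<noteq> b \<Longrightarrow> dist (u a) (u b) < dist a b"
  shows "\<exists>\<epsilon>>0. \<forall>x\<in>cball 0 1. norm (u x) \<le> 1 - \<epsilon>"
proof -
  have "dist (u a) (u b) \<le> 1 * dist a b" for a b
    using contr[of a b] by (cases "a = b") auto
  then have "1-lipschitz_on UNIV u"
    by (intro lipschitz_onI) auto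
  then have "continuous_on (cball 0 1) (\<lambda>x. norm (u x))"
    by (intro continuous_on_norm continuous_on_subset[OF lipschitz_on_continuous_on]) auto
  then have "\<exists>z\<in>cball 0 1. \<forall>x\<in>cball 0 1. norm (u x) \<le> norm (u z)"
    by (intro continuous_attains_sup) auto
  then obtain z where z: "z \<in> cball 0 1" and z_max: "\<forall>x\<in>cball 0 1. norm (u x) \<le> norm (u z)"
    by blast
  have "norm (u z) < 1"
  proof (cases "z = 0")
    case False
    then have "dist (u z) (u 0) < dist z 0" by (rule contr)
    then show ?thesis using z \<open>u 0 = 0\<close> by simp
  qed (simp add: \<open>u 0 = 0\<close>)
  then show ?thesis
    using z_max by (intro exI[of _ "1 - norm (u z)"]) auto
qed

lemma strict_contraction_le_chi:
  fixes u :: "real^'n \<Rightarrow> 'b::real_normed_vector"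
  assumes "u 0 = 0" and contr: "\<And>a b. a \<noteq> b \<Longrightarrow> dist (u a) (u b) < dist a b"
  shows "\<exists>\<epsilon>>0. \<forall>x. norm (u x) \<le> chi \<epsilon> x"
proof -
  obtain \<epsilon> where "\<epsilon> > 0" and ball_bound: "\<forall>x\<in>cball 0 1. norm (u x) \<le> 1 - \<epsilon>"
    using strict_contraction_bounded_on_unit_ball[OF assms] by blast
  have "norm (u x) \<le> norm x - \<epsilon>" if "norm x > 1" for x
  proof -
    define y where "y = (1 / norm x) *\<^sub>R x"
    have "x \<noteq> 0"
      using that by auto
    then have "norm y = 1" and "x - y = (1 - 1 / norm x) *\<^sub>R x"
      by (simp_all add: y_def algebra_simps)
    moreover have "1 / norm x \<le> 1"
      using that by (simp add: divide_le_eq)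
    ultimately have "dist x y = (1 - 1 / norm x) * norm x"
      by (simp add: dist_norm)
    also have "\<dots> = norm x - 1"
      using \<open>x \<noteq> 0\<close> by (simp add: field_simps)
    finally have "dist x y = norm x - 1" .
    moreover have "dist (u x) (u y) \<le> dist x y"
      using contr[of x y] by (cases "x = y") auto
    moreover have "norm (u x) \<le> norm (u y) + dist (u x) (u y)"
      by (metis dist_norm norm_triangle_sub)
    moreover have "norm (u y) \<le> 1 - \<epsilon>"
      using ball_bound \<open>norm y = 1\<close> by simp
    ultimately show ?thesis
      by linarith
  qed
  then show ?thesis
    using \<open>\<epsilon> > 0\<close> ball_bound unfolding chi_def by (intro exI[of _ \<epsilon>]) auto
qed

lemma le_chi_imp_norm_sq_diff_ge:
  fixes x :: "real^'n" and y :: "'b::real_normed_vector"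
  assumes "norm y \<le> chi \<epsilon> x" and "0 \<le> \<epsilon>" and "1 \<le> R" and "R \<le> norm x"
  shows "2 * \<epsilon> * R - \<epsilon> ^ 2 \<le> norm x ^ 2 - norm y ^ 2"
proof -
  have "norm y \<le> norm x - \<epsilon>"
    using assms unfolding chi_def by (auto split: if_splits)
  then have "norm y ^ 2 \<le> (norm x - \<epsilon>) ^ 2"
    by (simp add: power_mono)
  moreover have "2 * \<epsilon> * R \<le> 2 * \<epsilon> * norm x"
    using assms by (simp add: mult_left_mono)
  ultimately show ?thesis
    by (simp add: power2_eq_square algebra_simps)
qed

lemma INF_ereal_tendsto_PInfty:
  fixes f :: "'a \<Rightarrow> real"
  assumes "filterlim b at_top F" and "\<forall>\<^sub>F R in F. \<forall>x\<in>A R. b R \<le> f x"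
  shows "((\<lambda>R. INF x\<in>A R. ereal (f x)) \<longlongrightarrow> \<infinity>) F"
  unfolding tendsto_PInfty
proof
  fix r
  have "\<forall>\<^sub>F R in F. r < b R"
    using assms(1) filterlim_at_top_dense by blast
  with assms(2) show "\<forall>\<^sub>F R in F. ereal r < (INF x\<in>A R. ereal (f x))"
  proof eventually_elim
    case (elim R)
    then have "ereal r < ereal (b R)"
      by simp
    also have "\<dots> \<le> (INF x\<in>A R. ereal (f x))"
      using elim by (intro INF_greatest) simp
    finally show ?case .
  qed
qed

lemma graph_minus_cylinder_eq_image:
  fixes u :: "real^'n \<Rightarrow> real^'m"
  assumes "0 \<le> R"
  shows "graph_of u - cylinder R = (\<lambda>x. (x, u x)) ` (UNIV - ball 0 R)"
proof -
  have "norm x ^ 2 < R ^ 2 \<longleftrightarrow> norm x < R" for x :: "real^'n"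
    using assms by (auto intro: power_strict_mono dest: power_less_imp_less_base)
  then show ?thesis
    by (auto simp: graph_of_def cylinder_def dist_norm)
qed

theorem lemma5p1:
  fixes u :: "real^'n \<Rightarrow> real^'m"
  assumes "spacelike_graph u"
    and "(0, 0) \<in> graph_of u"
  shows "((\<lambda>R. INF x\<in>UNIV - ball 0 R. ereal (norm x ^ 2 - norm (u x) ^ 2))
            \<longlongrightarrow> \<infinity>) at_top
       \<and> ((\<lambda>R. INF X\<in>graph_of u - cylinder R. ereal (lorentz_sq X))
            \<longlongrightarrow> \<infinity>) at_top
       \<and> (\<exists>\<epsilon>>0. \<forall>x. norm (u x) \<le> chi \<epsilon> x)"
proof -
  have "u 0 = 0"
    using assms(2) unfolding graph_of_def by auto
  then obtain \<epsilon> where "\<epsilon> > 0" and chi_bound: "\<forall>x. norm (u x) \<le> chi \<epsilon> x"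
    using strict_contraction_le_chi spacelike_graph_dist_less[OF assms(1)] by blast
  have "filterlim (\<lambda>R. (- (\<epsilon> ^ 2)) + 2 * \<epsilon> * R) at_top at_top"
    using \<open>\<epsilon> > 0\<close> by (intro filterlim_tendsto_add_at_top[OF tendsto_const]
        filterlim_tendsto_pos_mult_at_top[OF tendsto_const _ filterlim_ident]) simp
  then have "filterlim (\<lambda>R. 2 * \<epsilon> * R - \<epsilon> ^ 2) at_top at_top"
    by (simp add: algebra_simps)
  moreover have "\<forall>\<^sub>F R in at_top. \<forall>x\<in>UNIV - ball 0 R.
      2 * \<epsilon> * R - \<epsilon> ^ 2 \<le> norm x ^ 2 - norm (u x) ^ 2"
    using eventually_ge_at_top[of 1] by eventually_elim
      (use chi_bound \<open>\<epsilon> > 0\<close> in \<open>auto intro!: le_chi_imp_norm_sq_diff_ge simp: dist_norm\<close>)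
  ultimately have "((\<lambda>R. INF x\<in>UNIV - ball 0 R. ereal (norm x ^ 2 - norm (u x) ^ 2)) \<longlongrightarrow> \<infinity>) at_top"
    by (rule INF_ereal_tendsto_PInfty)
  moreover have "\<forall>\<^sub>F R in at_top. (INF X\<in>graph_of u - cylinder R. ereal (lorentz_sq X))
      = (INF x\<in>UNIV - ball 0 R. ereal (norm x ^ 2 - norm (u x) ^ 2))"
    using eventually_ge_at_top[of 0]
    by eventually_elim (simp add: graph_minus_cylinder_eq_image image_comp o_def lorentz_sq_def)
  ultimately show ?thesis
    using tendsto_cong chi_bound \<open>\<epsilon> > 0\<close> by fastforce
qed

end
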